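(* Let $m,n\ge1$ and $k$ be integers with $|k|_m=n$, and let $G=\langle a,b\mid a^m=1=b^n,\ b^{-1}ab=a^k\rangle$. Let $s$ be an odd prime with $\gcd(s,m)=1$, $\zeta$ a primitive $m$-th root of unity in $\overline{\mathbb{F}}_s$, and $q$ a power of $s$. Then the induced representation $\rho^G$ is realizable over $\mathbb{F}_q$ if and only if $q\equiv k^i\pmod m$ for some $i$ with $0\le i\le n-1$.
   Context: $|k|_m$ denotes the multiplicative order of $k$ modulo $m$. $\rho:\langle a\rangle\to\overline{\mathbb{F}}_s^*$ is given by $\rho(a)=\zeta$ and $\rho^G$ is the induced representation of $G$; concretely it acts on a space with basis $e_0,\dots,e_{n-1}$ by $ae_i=\zeta^{k^i}e_i$, $be_i=e_{i+1}$ (indices modulo $n$). A representation of $G$ over $\overline{\mathbb{F}}_s$ is realizable over a subfield $\mathbb{F}_q$ if it is equivalent (over $\overline{\mathbb{F}}_s$) to a matrix representation all of whose matrices have entries in $\mathbb{F}_q$. *)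

theory Defs
  imports "HOL-Computational_Algebra.Computational_Algebra" "HOL-Number_Theory.Number_Theory"
    "Jordan_Normal_Form.Matrix"
begin

definition mult_ord :: "nat \<Rightarrow> int \<Rightarrow> nat" where
  "mult_ord m k = ord m (nat (k mod int m))"

definition primitive_root_of_unity :: "nat \<Rightarrow> 'a::field \<Rightarrow> bool" where
  "primitive_root_of_unity m z \<longleftrightarrow> z ^ m = 1 \<and> (\<forall>d. 0 < d \<and> d < m \<longrightarrow> z ^ d \<noteq> 1)"

definition Fq :: "nat \<Rightarrow> 'a::field set" where
  "Fq q = {x. x ^ q = x}"

text \<open>Matrices of a and b in the induced representation rho^G, w.r.t. basis e_0..e_{n-1}:
  a e_i = zeta^(k^i) e_i,  b e_i = e_{i+1} (indices mod n).\<close>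
definition ind_a :: "nat \<Rightarrow> int \<Rightarrow> 'a::field \<Rightarrow> 'a mat" where
  "ind_a n k z = mat n n (\<lambda>(i,j). if i = j then z powi (k ^ i) else 0)"

definition ind_b :: "nat \<Rightarrow> 'a::field mat" where
  "ind_b n = mat n n (\<lambda>(i,j). if i = (j + 1) mod n then 1 else 0)"

inductive_set gen_mats :: "nat \<Rightarrow> 'a::field mat set \<Rightarrow> 'a mat set" for n gens where
  one: "1\<^sub>m n \<in> gen_mats n gens"
| mul: "M \<in> gen_mats n gens \<Longrightarrow> A \<in> gens \<Longrightarrow> M * A \<in> gen_mats n gens"
| mul_inv: "M \<in> gen_mats n gens \<Longrightarrow> A \<in> gens \<Longrightarrow> A' \<in> carrier_mat n n \<Longrightarrow>
     A * A' = 1\<^sub>m n \<Longrightarrow> M * A' \<in> gen_mats n gens"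

definition realizable_over :: "nat \<Rightarrow> 'a::field set \<Rightarrow> 'a mat set \<Rightarrow> bool" where
  "realizable_over n K Ms \<longleftrightarrow>
     (\<exists>P Q. P \<in> carrier_mat n n \<and> Q \<in> carrier_mat n n \<and> P * Q = 1\<^sub>m n \<and> Q * P = 1\<^sub>m n \<and>
        (\<forall>M\<in>Ms. \<forall>i<n. \<forall>j<n. (P * M * Q) $$ (i, j) \<in> K))"

end

theory Submission
  imports Defs "Jordan_Normal_Form.Determinant"
begin

(* Put y i = zeta^(k^i).  Then rho^G(a) is the diagonal matrix diag(y 0, ..., y (n-1))
   and rho^G(b) is the cyclic shift; since |k|_m = n the y i are pairwise distinct and y is
   n-periodic.  Let Phi_q = frob_mat q be the entrywise Frobenius x |-> x^q on matrices; it is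
   multiplicative, and an entry lies in F_q iff it is fixed by x |-> x^q.
   Necessity: if rho^G is conjugate to a representation over F_q, the traces of the matrices
   a^j = diag(y i ^ j) lie in F_q, so the power sums of the y i equal those of the y i ^ q.  Since
   all y i are m-th roots of unity and m is invertible in the field, equal power sums force equal
   multiplicities (discrete Fourier inversion); hence zeta^q = (y 0)^q is some y i, i.e. q = k^i mod m.
   Sufficiency: if q = k^t mod m, Frobenius shifts the y i by t, so Phi_q(X) * R = R * X for both
   generators and hence for every matrix X of the representation, R the shift by t.  The
   Vandermonde matrix W = (y i ^ l) is invertible with Phi_q(W) = R * W, and then W^-1 * X * W is
   fixed by Phi_q, i.e. has entries in F_q. *)

section \<open>Roots of unity and multiplicative orders\<close>

lemma primitive_root_powi_eq_iff:
  fixes z :: "'a::field"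
  assumes m: "m \<ge> 1" and prim: "primitive_root_of_unity m z"
  shows "z powi a = z powi b \<longleftrightarrow> [a = b] (mod int m)"
proof -
  have zm: "z ^ m = 1" and minimal: "\<And>d. 0 < d \<Longrightarrow> d < m \<Longrightarrow> z ^ d \<noteq> 1"
    using prim unfolding primitive_root_of_unity_def by auto
  have z0: "z \<noteq> 0" using zm m by (cases "z = 0") (auto simp: power_0_left)
  have reduce: "z powi c = z ^ nat (c mod int m)" for c
  proof -
    have nonneg: "c mod int m = int (nat (c mod int m))" using m by simp
    have "z powi c = z powi (int m * (c div int m)) * z powi (c mod int m)"
      by (simp flip: power_int_add add: z0)
    also have "z powi (int m * (c div int m)) = 1" by (simp add: power_int_mult zm)
    also have "z powi (c mod int m) = z ^ nat (c mod int m)" by (metis nonneg power_int_of_nat)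
    finally show ?thesis by simp
  qed
  have distinct: "z ^ u \<noteq> z ^ v" if "u < v" "v < m" for u v
  proof
    assume "z ^ u = z ^ v"
    moreover have "z ^ v = z ^ u * z ^ (v - u)" using that by (simp flip: power_add)
    ultimately have "z ^ (v - u) = 1" using z0 by simp
    thus False using minimal[of "v - u"] that by simp
  qed
  have "z ^ u = z ^ v \<longleftrightarrow> u = v" if "u < m" "v < m" for u v
    using distinct[of u v] distinct[of v u] that by (cases u v rule: linorder_cases) auto
  moreover have "nat (c mod int m) < m" for c using m by (simp add: nat_less_iff)
  ultimately have "z powi a = z powi b \<longleftrightarrow> nat (a mod int m) = nat (b mod int m)"
    by (simp add: reduce)
  also have "\<dots> \<longleftrightarrow> a mod int m = b mod int m" using m by (auto simp: nat_eq_iff2)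
  finally show ?thesis by (simp add: cong_def)
qed

lemma mult_ord_power_cong_iff:
  assumes m: "m \<ge> 1" and ord: "mult_ord m k = n" and n: "n \<ge> 1"
  shows "[k ^ i = k ^ j] (mod int m) \<longleftrightarrow> [i = j] (mod n)"
proof -
  define K where "K = nat (k mod int m)"
  have ordK: "ord m K = n" using ord unfolding mult_ord_def K_def .
  have coprime: "coprime m K" using ordK n ord_eq_0[of m K] by simp
  have intK: "int K = k mod int m" using m by (simp add: K_def)
  have "[k ^ i = k ^ j] (mod int m) \<longleftrightarrow> [(k mod int m) ^ i = (k mod int m) ^ j] (mod int m)"
    by (simp add: cong_def power_mod)
  also have "\<dots> \<longleftrightarrow> [int (K ^ i) = int (K ^ j)] (mod int m)" by (simp add: intK)
  also have "\<dots> \<longleftrightarrow> [K ^ i = K ^ j] (mod m)" by (rule cong_int_iff)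
  also have "\<dots> \<longleftrightarrow> [i = j] (mod n)" using order_divides_expdiff[OF coprime] ordK by simp
  finally show ?thesis .
qed

lemma root_of_unity_orthogonality:
  fixes w x :: "'a::field"
  assumes m: "m \<ge> 1" and w: "w ^ m = 1" and x: "x ^ m = 1"
  shows "(\<Sum>j<m. (x * w ^ (m - 1)) ^ j) = (if x = w then of_nat m else 0)"
proof -
  have w_inv: "w * w ^ (m - 1) = 1" using w m by (simp flip: power_Suc)
  show ?thesis
  proof (cases "x = w")
    case True thus ?thesis using w_inv by simp
  next
    case False
    have "x * w ^ (m - 1) \<noteq> 1"
    proof
      assume one: "x * w ^ (m - 1) = 1"
      have "x = x * (w * w ^ (m - 1))" using w_inv by simp
      also have "\<dots> = (x * w ^ (m - 1)) * w" by (simp add: algebra_simps)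
      also have "\<dots> = w" by (simp only: one mult_1_left)
      finally show False using False by simp
    qed
    moreover have "(x * w ^ (m - 1)) ^ m = 1"
      using w x by (simp add: power_mult_distrib flip: power_mult) (simp add: mult.commute power_mult)
    ultimately show ?thesis using geometric_sum[of "x * w ^ (m - 1)" m] False by simp
  qed
qed

lemma multiplicity_by_power_sums:
  fixes f :: "'b \<Rightarrow> 'a::field"
  assumes m: "m \<ge> 1" and w: "w ^ m = 1" and f: "\<And>i. i \<in> I \<Longrightarrow> f i ^ m = 1"
  shows "(\<Sum>i\<in>I. if f i = w then of_nat m else 0) = (\<Sum>j<m. (w ^ (m - 1)) ^ j * (\<Sum>i\<in>I. f i ^ j))"
proof -
  have "(\<Sum>j<m. (w ^ (m - 1)) ^ j * (\<Sum>i\<in>I. f i ^ j)) = (\<Sum>j<m. \<Sum>i\<in>I. (f i * w ^ (m - 1)) ^ j)"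
    unfolding sum_distrib_left power_mult_distrib by (simp add: mult.commute)
  also have "\<dots> = (\<Sum>i\<in>I. \<Sum>j<m. (f i * w ^ (m - 1)) ^ j)" by (rule sum.swap)
  also have "\<dots> = (\<Sum>i\<in>I. if f i = w then of_nat m else 0)"
  proof (rule sum.cong)
    fix i assume "i \<in> I"
    show "(\<Sum>j<m. (f i * w ^ (m - 1)) ^ j) = (if f i = w then of_nat m else 0)"
      by (rule root_of_unity_orthogonality[OF m w f[OF \<open>i \<in> I\<close>]])
  qed simp
  finally show ?thesis by simp
qed

section \<open>The Frobenius map and the subfield F_q\<close>

text \<open>For q a power of the prime characteristic, x \<mapsto> x^q is an additive (freshman's dream) and
  hence injective endomorphism of the field, and F_q is closed under finite sums.\<close>
lemma frobenius_inj:
  fixes x y :: "'a::field"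
  assumes p: "prime CHAR('a)" and q: "q = CHAR('a) ^ r" and e: "x ^ q = y ^ q"
  shows "x = y"
proof -
  have "x ^ q = (x - y) ^ q + y ^ q" using freshmans_dream'[OF p q, of "x - y" y] by simp
  with e have "(x - y) ^ q = 0" by simp
  thus ?thesis by simp
qed

lemma Fq_sum:
  fixes f :: "'b \<Rightarrow> 'a::field"
  assumes p: "prime CHAR('a)" and q: "q = CHAR('a) ^ r" and f: "\<And>i. i \<in> A \<Longrightarrow> f i \<in> Fq q"
  shows "sum f A \<in> Fq q"
proof -
  have "sum f A ^ q = sum (\<lambda>i. f i ^ q) A" by (rule freshmans_dream_sum'[OF p q])
  also have "\<dots> = sum f A" using f by (auto simp: Fq_def intro!: sum.cong)
  finally show ?thesis by (simp add: Fq_def)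
qed

definition frob_mat :: "nat \<Rightarrow> 'a::field mat \<Rightarrow> 'a mat" where
  "frob_mat q M = map_mat (\<lambda>x. x ^ q) M"

lemma frob_mat_carrier[simp]: "A \<in> carrier_mat n c \<Longrightarrow> frob_mat q A \<in> carrier_mat n c"
  by (simp add: frob_mat_def)

lemma frob_mat_dims[simp]: "dim_row (frob_mat q A) = dim_row A" "dim_col (frob_mat q A) = dim_col A"
  by (simp_all add: frob_mat_def)

lemma frob_mat_index[simp]:
  "i < dim_row A \<Longrightarrow> j < dim_col A \<Longrightarrow> frob_mat q A $$ (i, j) = (A $$ (i, j)) ^ q"
  by (simp add: frob_mat_def)

lemma frob_mat_mult:
  fixes A B :: "'a::field mat"
  assumes p: "prime CHAR('a)" and q: "q = CHAR('a) ^ r"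
    and A: "A \<in> carrier_mat n c" and B: "B \<in> carrier_mat c d"
  shows "frob_mat q (A * B) = frob_mat q A * frob_mat q B"
proof (rule eq_matI)
  fix i j assume "i < dim_row (frob_mat q A * frob_mat q B)" "j < dim_col (frob_mat q A * frob_mat q B)"
  hence i: "i < n" and j: "j < d" using A B by auto
  have "frob_mat q (A * B) $$ (i, j) = (\<Sum>l\<in>{0..<c}. A $$ (i, l) * B $$ (l, j)) ^ q"
    using A B i j by (simp add: scalar_prod_def)
  also have "\<dots> = (\<Sum>l\<in>{0..<c}. (A $$ (i, l)) ^ q * (B $$ (l, j)) ^ q)"
    by (simp add: freshmans_dream_sum'[OF p q] power_mult_distrib)
  also have "\<dots> = (frob_mat q A * frob_mat q B) $$ (i, j)"
    using A B i j by (simp add: scalar_prod_def)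
  finally show "frob_mat q (A * B) $$ (i, j) = (frob_mat q A * frob_mat q B) $$ (i, j)" .
qed simp_all

lemma frob_mat_one: "q > 0 \<Longrightarrow> frob_mat q (1\<^sub>m n :: 'a::field mat) = 1\<^sub>m n"
  by (rule eq_matI) auto

lemma frob_twisted_mult:
  fixes M X R :: "'a::field mat"
  assumes p: "prime CHAR('a)" and q: "q = CHAR('a) ^ r"
    and M: "M \<in> carrier_mat n n" and X: "X \<in> carrier_mat n n" and R: "R \<in> carrier_mat n n"
    and twM: "frob_mat q M * R = R * M" and twX: "frob_mat q X * R = R * X"
  shows "frob_mat q (M * X) * R = R * (M * X)"
proof -
  note assoc = assoc_mult_mat[of _ n n _ n _ n]
  have "frob_mat q (M * X) * R = frob_mat q M * (frob_mat q X * R)"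
    using frob_mat_mult[OF p q M X] M X R by (simp add: assoc)
  also have "\<dots> = (frob_mat q M * R) * X" using twX M X R by (simp add: assoc)
  also have "\<dots> = R * (M * X)" using twM M X R by (simp add: assoc)
  finally show ?thesis .
qed

lemma frob_twisted_inverse:
  fixes X X' R :: "'a::field mat"
  assumes p: "prime CHAR('a)" and q: "q = CHAR('a) ^ r"
    and X: "X \<in> carrier_mat n n" and X': "X' \<in> carrier_mat n n" and R: "R \<in> carrier_mat n n"
    and inv: "X * X' = 1\<^sub>m n" and twX: "frob_mat q X * R = R * X"
  shows "frob_mat q X' * R = R * X'"
proof -
  note assoc = assoc_mult_mat[of _ n n _ n _ n]
  have q0: "q > 0" using p q by (simp add: prime_gt_0_nat)
  have "frob_mat q X * frob_mat q X' = 1\<^sub>m n"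
    using frob_mat_mult[OF p q X X'] inv frob_mat_one[OF q0, where 'a='a] by simp
  hence frob_inv: "frob_mat q X' * frob_mat q X = 1\<^sub>m n"
    by (rule mat_mult_left_right_inverse[OF frob_mat_carrier[OF X] frob_mat_carrier[OF X']])
  have "R * X' = frob_mat q X' * frob_mat q X * R * X'" using R X' frob_inv by simp
  also have "\<dots> = frob_mat q X' * (frob_mat q X * R) * X'" using X X' R by (simp add: assoc)
  also have "\<dots> = frob_mat q X' * R * (X * X')" using twX X X' R by (simp add: assoc)
  also have "\<dots> = frob_mat q X' * R" using inv X' R by simp
  finally show ?thesis by simp
qed

lemma gen_mats_frob_twisted:
  fixes R :: "'a::field mat"
  assumes p: "prime CHAR('a)" and q: "q = CHAR('a) ^ r" and R: "R \<in> carrier_mat n n"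
    and gens: "\<And>X. X \<in> gens \<Longrightarrow> X \<in> carrier_mat n n \<and> frob_mat q X * R = R * X"
    and M: "M \<in> gen_mats n gens"
  shows "M \<in> carrier_mat n n \<and> frob_mat q M * R = R * M"
  using M
proof (induction rule: gen_mats.induct)
  case one
  have "q > 0" using p q by (simp add: prime_gt_0_nat)
  thus ?case using frob_mat_one[of q n, where 'a='a] R by simp
next
  case (mul M X)
  thus ?case using frob_twisted_mult[OF p q, of M n X R] gens[of X] R by auto
next
  case (mul_inv M X X')
  have "frob_mat q X' * R = R * X'"
    using frob_twisted_inverse[OF p q, of X n X' R] gens[OF mul_inv(2)] mul_inv(3,4) R by auto
  thus ?case using frob_twisted_mult[OF p q, of M n X' R] mul_inv R by auto
qed

section \<open>Diagonal, permutation and Vandermonde matrices\<close>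

definition diag_matrix :: "nat \<Rightarrow> (nat \<Rightarrow> 'a::field) \<Rightarrow> 'a mat" where
  "diag_matrix n d = mat n n (\<lambda>(i,j). if i = j then d i else 0)"

text \<open>perm_matrix n f has row i equal to the unit vector e_(f i), so it permutes rows by f.\<close>
definition perm_matrix :: "nat \<Rightarrow> (nat \<Rightarrow> nat) \<Rightarrow> 'a::field mat" where
  "perm_matrix n f = mat n n (\<lambda>(i,j). if j = f i then 1 else 0)"

definition shift_matrix :: "nat \<Rightarrow> nat \<Rightarrow> 'a::field mat" where
  "shift_matrix n t = perm_matrix n (\<lambda>i. (i + t) mod n)"

lemma diag_matrix_carrier[simp]: "diag_matrix n d \<in> carrier_mat n n"
  by (simp add: diag_matrix_def)

lemma perm_matrix_carrier[simp]: "perm_matrix n f \<in> carrier_mat n n"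
  by (simp add: perm_matrix_def)

lemma shift_matrix_carrier[simp]: "shift_matrix n t \<in> carrier_mat n n"
  by (simp add: shift_matrix_def)

lemma diag_matrix_mult_index:
  assumes X: "X \<in> carrier_mat n c" and i: "i < n" and j: "j < c"
  shows "(diag_matrix n d * X) $$ (i, j) = d i * X $$ (i, j)"
proof -
  have "(diag_matrix n d * X) $$ (i, j) = (\<Sum>l\<in>{0..<n}. (if i = l then d i else 0) * X $$ (l, j))"
    using X i j by (auto simp: diag_matrix_def scalar_prod_def intro!: sum.cong)
  also have "\<dots> = (\<Sum>l\<in>{0..<n}. (if l = i then d i * X $$ (l, j) else 0))"
    by (rule sum.cong) auto
  finally show ?thesis using i by simp
qed

lemma diag_matrix_mult: "diag_matrix n d * diag_matrix n e = diag_matrix n (\<lambda>i. d i * e i)"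
proof (rule eq_matI)
  fix i j assume "i < dim_row (diag_matrix n (\<lambda>i. d i * e i))" "j < dim_col (diag_matrix n (\<lambda>i. d i * e i))"
  hence "i < n" "j < n" by (auto simp: diag_matrix_def)
  thus "(diag_matrix n d * diag_matrix n e) $$ (i, j) = diag_matrix n (\<lambda>i. d i * e i) $$ (i, j)"
    using diag_matrix_mult_index[of "diag_matrix n e" n n i j d] by (simp add: diag_matrix_def)
qed (auto simp: diag_matrix_def)

lemma diag_matrix_one: "diag_matrix n (\<lambda>i. 1) = 1\<^sub>m n"
  by (rule eq_matI) (auto simp: diag_matrix_def)

lemma perm_matrix_mult_index:
  assumes X: "X \<in> carrier_mat n c" and i: "i < n" and j: "j < c" and f: "f i < n"
  shows "(perm_matrix n f * X) $$ (i, j) = X $$ (f i, j)"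
proof -
  have "(perm_matrix n f * X) $$ (i, j) = (\<Sum>l\<in>{0..<n}. (if l = f i then 1 else 0) * X $$ (l, j))"
    using X i j by (simp add: perm_matrix_def scalar_prod_def)
  also have "\<dots> = (\<Sum>l\<in>{0..<n}. (if l = f i then X $$ (l, j) else 0))"
    by (rule sum.cong) auto
  finally show ?thesis using f by simp
qed

lemma perm_matrix_mult:
  assumes f: "\<And>i. i < n \<Longrightarrow> f i < n"
  shows "perm_matrix n f * perm_matrix n g = (perm_matrix n (g \<circ> f) :: 'a::field mat)"
proof (rule eq_matI)
  fix i j assume "i < dim_row (perm_matrix n (g \<circ> f) :: 'a mat)" "j < dim_col (perm_matrix n (g \<circ> f) :: 'a mat)"
  hence "i < n" "j < n" by (auto simp: perm_matrix_def)
  thus "(perm_matrix n f * perm_matrix n g) $$ (i, j) = (perm_matrix n (g \<circ> f) :: 'a mat) $$ (i, j)"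
    using perm_matrix_mult_index[of "perm_matrix n g" n n i j f] f by (simp add: perm_matrix_def)
qed (auto simp: perm_matrix_def)

lemma shift_matrix_mult:
  assumes n: "n > 0"
  shows "shift_matrix n a * shift_matrix n b = (shift_matrix n (a + b) :: 'a::field mat)"
proof -
  have "shift_matrix n a * shift_matrix n b =
      (perm_matrix n (\<lambda>i. ((i + a) mod n + b) mod n) :: 'a mat)"
    unfolding shift_matrix_def using n by (subst perm_matrix_mult) (auto simp: comp_def)
  also have "\<dots> = shift_matrix n (a + b)"
    unfolding shift_matrix_def by (simp add: mod_add_left_eq add.assoc)
  finally show ?thesis .
qed

lemma shift_matrix_full_turn: "shift_matrix n n = (1\<^sub>m n :: 'a::field mat)"
  by (rule eq_matI) (auto simp: shift_matrix_def perm_matrix_def)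

lemma frob_diag_shift:
  assumes q: "q > 0" and t: "\<And>i. i < n \<Longrightarrow> d i ^ q = d ((i + t) mod n)"
  shows "frob_mat q (diag_matrix n d) * shift_matrix n t = shift_matrix n t * diag_matrix n d"
proof (rule eq_matI)
  fix i j assume "i < dim_row (shift_matrix n t * diag_matrix n d :: 'a mat)"
    "j < dim_col (shift_matrix n t * diag_matrix n d :: 'a mat)"
  hence i: "i < n" and j: "j < n" by (auto simp: shift_matrix_def perm_matrix_def diag_matrix_def)
  have n: "(i + t) mod n < n" using i by simp
  have "frob_mat q (diag_matrix n d) = diag_matrix n (\<lambda>i. d i ^ q)"
    using q by (intro eq_matI) (auto simp: diag_matrix_def)
  hence "(frob_mat q (diag_matrix n d) * shift_matrix n t) $$ (i, j)
      = d ((i + t) mod n) * shift_matrix n t $$ (i, j)"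
    using diag_matrix_mult_index[of "shift_matrix n t" n n i j "\<lambda>i. d i ^ q"] i j t by simp
  also have "\<dots> = diag_matrix n d $$ ((i + t) mod n, j)"
    using i j n by (simp add: shift_matrix_def perm_matrix_def diag_matrix_def)
  also have "\<dots> = (shift_matrix n t * diag_matrix n d) $$ (i, j)"
    unfolding shift_matrix_def by (rule perm_matrix_mult_index[symmetric]) (use i j n in auto)
  finally show "(frob_mat q (diag_matrix n d) * shift_matrix n t) $$ (i, j)
      = (shift_matrix n t * diag_matrix n d) $$ (i, j)" .
qed (auto simp: shift_matrix_def perm_matrix_def diag_matrix_def)

text \<open>A Vandermonde matrix with distinct nodes is invertible: a nonzero kernel vector would be the
  coefficient vector of a polynomial of degree < n with n roots.\<close>
lemma vandermonde_det_nonzero: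
  fixes y :: "nat \<Rightarrow> 'a::field"
  assumes n: "n \<ge> 1" and inj: "inj_on y {..<n}"
  shows "det (mat n n (\<lambda>(i, l). y i ^ l)) \<noteq> 0"
proof
  let ?W = "mat n n (\<lambda>(i, l). y i ^ l)"
  assume "det ?W = 0"
  then obtain v where v: "v \<in> carrier_vec n" "v \<noteq> 0\<^sub>v n" "?W *\<^sub>v v = 0\<^sub>v n"
    using det_0_iff_vec_prod_zero_field[of ?W n] by auto
  define p where "p = (\<Sum>l<n. Polynomial.monom (v $ l) l)"
  have coeff_p: "Polynomial.coeff p l = (if l < n then v $ l else 0)" for l
    unfolding p_def Polynomial.coeff_sum Polynomial.coeff_monom by (simp add: if_distrib cong: if_cong)
  obtain l where l: "l < n" "v $ l \<noteq> 0"
  proof -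
    have "\<not> (\<forall>l<n. v $ l = 0)"
    proof
      assume "\<forall>l<n. v $ l = 0"
      hence "v = 0\<^sub>v n" using v(1) by (intro eq_vecI) auto
      thus False using v(2) by simp
    qed
    thus ?thesis using that by blast
  qed
  have p0: "p \<noteq> 0" using coeff_p[of l] l by auto
  have "degree p \<le> n - 1" by (rule degree_le) (use coeff_p in auto)
  have roots: "poly p (y i) = 0" if i: "i < n" for i
  proof -
    have "poly p (y i) = (?W *\<^sub>v v) $ i"
      unfolding p_def poly_sum poly_monom
      using v(1) i by (auto simp: scalar_prod_def atLeast0LessThan mult.commute intro!: sum.cong)
    thus ?thesis using v(3) i by simp
  qed
  have "n = card (y ` {..<n})" using inj by (simp add: card_image)
  also have "\<dots> \<le> card {x. poly p x = 0}"
    by (rule card_mono[OF poly_roots_finite[OF p0]]) (use roots in auto)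
  also have "\<dots> \<le> degree p" by (rule card_poly_roots_bound[OF p0])
  finally show False using \<open>degree p \<le> n - 1\<close> n by simp
qed

definition mat_trace :: "nat \<Rightarrow> 'a::field mat \<Rightarrow> 'a" where
  "mat_trace n M = (\<Sum>i<n. M $$ (i, i))"

lemma mat_trace_comm:
  assumes A: "A \<in> carrier_mat n n" and B: "B \<in> carrier_mat n n"
  shows "mat_trace n (A * B) = mat_trace n (B * A)"
proof -
  have expand: "mat_trace n (X * Y) = (\<Sum>i<n. \<Sum>j<n. X $$ (i, j) * Y $$ (j, i))"
    if "X \<in> carrier_mat n n" "Y \<in> carrier_mat n n" for X Y
  proof -
    have "row X i \<bullet> col Y i = (\<Sum>j<n. X $$ (i, j) * Y $$ (j, i))" if "i < n" for i
      unfolding scalar_prod_def using that \<open>X \<in> carrier_mat n n\<close> \<open>Y \<in> carrier_mat n n\<close>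
      by (auto simp: atLeast0LessThan intro!: sum.cong)
    thus ?thesis using that unfolding mat_trace_def by (auto intro!: sum.cong)
  qed
  show ?thesis
    unfolding expand[OF A B] expand[OF B A] by (subst sum.swap) (simp add: mult.commute)
qed

section \<open>Necessity: a realization over F_q forces Frobenius-stable eigenvalues\<close>

lemma realizable_trace_in_Fq:
  fixes M :: "'a::field mat"
  assumes p: "prime CHAR('a)" and q: "q = CHAR('a) ^ r"
    and real: "realizable_over n (Fq q) Ms" and M: "M \<in> Ms" "M \<in> carrier_mat n n"
  shows "mat_trace n M \<in> Fq q"
proof -
  obtain P Q where PQ: "P \<in> carrier_mat n n" "Q \<in> carrier_mat n n" "Q * P = 1\<^sub>m n"
    and entries: "\<And>i j. i < n \<Longrightarrow> j < n \<Longrightarrow> (P * M * Q) $$ (i, j) \<in> Fq q"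
    using real M(1) unfolding realizable_over_def by blast
  have "mat_trace n (P * M * Q) = mat_trace n (Q * (P * M))"
    using PQ M by (intro mat_trace_comm) auto
  also have "Q * (P * M) = M" using PQ M by (simp flip: assoc_mult_mat[of _ n n _ n _ n])
  finally have "mat_trace n M = mat_trace n (P * M * Q)" by simp
  thus ?thesis unfolding mat_trace_def using entries by (auto intro: Fq_sum[OF p q])
qed

lemma Fq_power_sums_imp_frobenius_stable:
  fixes y :: "nat \<Rightarrow> 'a::field"
  assumes p: "prime CHAR('a)" and q: "q = CHAR('a) ^ r"
    and m: "m \<ge> 1" and m_unit: "\<not> CHAR('a) dvd m"
    and roots: "\<And>i. i < n \<Longrightarrow> y i ^ m = 1" and inj: "inj_on y {..<n}"
    and sums: "\<And>j. (\<Sum>i<n. y i ^ j) \<in> Fq q" and i0: "i0 < n"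
  shows "\<exists>i<n. y i = y i0 ^ q"
proof -
  define w where "w = y i0 ^ q"
  have w: "w ^ m = 1" using roots[OF i0] by (simp add: w_def flip: power_mult) (simp add: power_mult mult.commute)
  have roots_q: "(y i ^ q) ^ m = 1" if "i < n" for i
    using roots[OF that] by (simp flip: power_mult) (simp add: power_mult mult.commute)
  have same_sums: "(\<Sum>i<n. (y i ^ q) ^ j) = (\<Sum>i<n. y i ^ j)" for j
  proof -
    have "(\<Sum>i<n. (y i ^ q) ^ j) = (\<Sum>i<n. y i ^ j) ^ q"
      by (simp add: freshmans_dream_sum'[OF p q] flip: power_mult) (simp add: mult.commute)
    thus ?thesis using sums[of j] by (simp add: Fq_def)
  qed
  have only_i0: "y i ^ q = w \<longleftrightarrow> i = i0" if "i < n" for i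
    using frobenius_inj[OF p q, of "y i" "y i0"] inj that i0 by (auto simp: w_def inj_on_def)
  have "(\<Sum>i<n. if y i ^ q = w then of_nat m else 0) = (\<Sum>i<n. if i = i0 then (of_nat m :: 'a) else 0)"
    by (rule sum.cong) (simp_all add: only_i0)
  hence "(of_nat m :: 'a) = (\<Sum>i<n. if y i ^ q = w then of_nat m else 0)"
    using i0 by simp
  also have "\<dots> = (\<Sum>i<n. if y i = w then of_nat m else 0)"
    using multiplicity_by_power_sums[OF m w, of "{..<n}"] roots roots_q by (simp add: same_sums)
  finally have "(\<Sum>i<n. if y i = w then (of_nat m :: 'a) else 0) \<noteq> 0"
    using m_unit by (simp add: of_nat_eq_0_iff_char_dvd)
  hence "\<exists>i<n. y i = w" by (auto intro: ccontr)
  thus ?thesis by (simp add: w_def)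
qed

section \<open>Sufficiency: descent along a Frobenius-twisting Vandermonde matrix\<close>

lemma realizable_by_twisting_matrix:
  fixes R W :: "'a::field mat"
  assumes p: "prime CHAR('a)" and q: "q = CHAR('a) ^ r"
    and R: "R \<in> carrier_mat n n" and R': "R' \<in> carrier_mat n n" "R' * R = 1\<^sub>m n"
    and W: "W \<in> carrier_mat n n" "det W \<noteq> 0" and frob_W: "frob_mat q W = R * W"
    and twisted: "\<And>M. M \<in> Ms \<Longrightarrow> M \<in> carrier_mat n n \<and> frob_mat q M * R = R * M"
  shows "realizable_over n (Fq q) Ms"
proof -
  note assoc = assoc_mult_mat[of _ n n _ n _ n]
  have q0: "q > 0" using p q by (simp add: prime_gt_0_nat)
  have "W \<in> Units (ring_mat TYPE('a) n undefined)" by (rule det_non_zero_imp_unit[OF W])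
  then obtain P where P: "P \<in> carrier_mat n n" "P * W = 1\<^sub>m n" "W * P = 1\<^sub>m n"
    unfolding Units_def by (auto simp: ring_mat_simps)
  have RR': "R * R' = 1\<^sub>m n" by (rule mat_mult_left_right_inverse[OF R'(1) R R'(2)])
  have frob_PRW: "frob_mat q P * (R * W) = 1\<^sub>m n"
    using frob_mat_mult[OF p q P(1) W(1)] P(2) frob_mat_one[OF q0, where 'a='a] frob_W by simp
  have "frob_mat q P * R = frob_mat q P * R * (W * P)" using P R by simp
  also have "\<dots> = (frob_mat q P * (R * W)) * P" using P R W by (simp add: assoc)
  also have "\<dots> = P" using frob_PRW P by simp
  finally have frob_PR: "frob_mat q P * R = P" .
  have "frob_mat q P = frob_mat q P * (R * R')" using RR' P by simp
  also have "\<dots> = P * R'" using frob_PR P R R' by (simp flip: assoc)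
  finally have frob_P: "frob_mat q P = P * R'" .
  show ?thesis unfolding realizable_over_def
  proof (intro exI conjI ballI allI impI)
    fix M i j assume M: "M \<in> Ms" and ij: "i < n" "j < n"
    have Mc: "M \<in> carrier_mat n n" and twM: "frob_mat q M * R = R * M" using twisted[OF M] by auto
    have "frob_mat q (P * M * W) = P * R' * frob_mat q M * (R * W)"
      using frob_mat_mult[OF p q P(1) Mc] frob_mat_mult[OF p q _ W(1), of "P * M" n] P Mc frob_P frob_W
      by simp
    also have "\<dots> = P * R' * (frob_mat q M * R) * W"
      using P R R' Mc W mult_carrier_mat[OF frob_mat_carrier[OF Mc] R] mult_carrier_mat[OF P(1) R'(1)]
      by (simp add: assoc)
    also have "\<dots> = P * (R' * R) * M * W"
      using twM P(1) R R'(1) Mc W(1) mult_carrier_mat[OF R Mc] mult_carrier_mat[OF P(1) R'(1)]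
        mult_carrier_mat[OF R'(1) R] by (simp add: assoc)
    also have "\<dots> = P * M * W" using R'(2) P(1) Mc by simp
    finally have "frob_mat q (P * M * W) = P * M * W" .
    moreover have "frob_mat q (P * M * W) $$ (i, j) = ((P * M * W) $$ (i, j)) ^ q"
      using ij P Mc W by simp
    ultimately show "(P * M * W) $$ (i, j) \<in> Fq q" by (simp add: Fq_def)
  qed (use P W in auto)
qed

section \<open>The induced representation\<close>

definition eigenvalue :: "int \<Rightarrow> 'a::field \<Rightarrow> nat \<Rightarrow> 'a" where
  "eigenvalue k z i = z powi (k ^ i)"

lemma ind_a_diag: "ind_a n k z = diag_matrix n (eigenvalue k z)"
  by (rule eq_matI) (auto simp: ind_a_def diag_matrix_def eigenvalue_def)

text \<open>rho^G(b) is the cyclic shift by n - 1 in the row convention of perm_matrix.\<close>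
lemma ind_b_shift:
  assumes n: "n \<ge> 1"
  shows "ind_b n = shift_matrix n (n - 1)"
proof (rule eq_matI)
  fix i j assume "i < dim_row (shift_matrix n (n - 1) :: 'a mat)" "j < dim_col (shift_matrix n (n - 1) :: 'a mat)"
  hence ij: "i < n" "j < n" by (auto simp: shift_matrix_def perm_matrix_def)
  have turn: "(x + 1 + (n - 1)) mod n = x" "(x + (n - 1) + 1) mod n = x" if "x < n" for x
    using that n by simp_all
  have "i = (j + 1) mod n \<longleftrightarrow> j = (i + (n - 1)) mod n"
  proof
    assume "i = (j + 1) mod n"
    hence "(i + (n - 1)) mod n = (j + 1 + (n - 1)) mod n" by (simp add: mod_add_left_eq)
    thus "j = (i + (n - 1)) mod n" using turn(1)[OF ij(2)] by simp
  next
    assume "j = (i + (n - 1)) mod n"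
    hence "(j + 1) mod n = (i + (n - 1) + 1) mod n" by (simp add: mod_Suc_eq)
    thus "i = (j + 1) mod n" using turn(2)[OF ij(1)] by simp
  qed
  thus "ind_b n $$ (i, j) = shift_matrix n (n - 1) $$ (i, j)"
    using ij by (simp add: ind_b_def shift_matrix_def perm_matrix_def)
qed (auto simp: ind_b_def shift_matrix_def perm_matrix_def)

lemma eigenvalue_eq_iff:
  assumes m: "m \<ge> 1" and ord: "mult_ord m k = n" and n: "n \<ge> 1"
    and prim: "primitive_root_of_unity m z"
  shows "eigenvalue k z i = eigenvalue k z j \<longleftrightarrow> [i = j] (mod n)"
  unfolding eigenvalue_def primitive_root_powi_eq_iff[OF m prim] by (rule mult_ord_power_cong_iff[OF m ord n])

lemma eigenvalue_power: "eigenvalue k z i ^ q = z powi (k ^ i * int q)"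
  by (simp add: eigenvalue_def power_int_mult)

lemma eigenvalue_root_of_unity:
  assumes "primitive_root_of_unity m z"
  shows "eigenvalue k z i ^ m = 1"
proof -
  have "z ^ m = 1" using assms by (simp add: primitive_root_of_unity_def)
  have "eigenvalue k z i ^ m = z powi (k ^ i * int m)" by (rule eigenvalue_power)
  also have "\<dots> = (z ^ m) powi (k ^ i)"
    by (simp only: mult.commute[of "k ^ i"] power_int_mult power_int_of_nat)
  finally show ?thesis using \<open>z ^ m = 1\<close> by simp
qed

lemma diag_powers_in_gen_mats:
  assumes "diag_matrix n d \<in> gens"
  shows "diag_matrix n (\<lambda>i. d i ^ j) \<in> gen_mats n gens"
proof (induction j)
  case 0 show ?case using gen_mats.one by (simp add: diag_matrix_one)
next
  case (Suc j)
  have "diag_matrix n (\<lambda>i. d i ^ Suc j) = diag_matrix n (\<lambda>i. d i ^ j) * diag_matrix n d"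
    by (simp add: diag_matrix_mult mult.commute)
  thus ?case using gen_mats.mul[OF Suc.IH assms] by simp
qed

lemma realizable_imp_cong:
  fixes z :: "'a::field"
  assumes m: "m \<ge> 1" and n: "n \<ge> 1" and ord: "mult_ord m k = n"
    and p: "prime CHAR('a)" and q: "q = CHAR('a) ^ r" and m_unit: "\<not> CHAR('a) dvd m"
    and prim: "primitive_root_of_unity m z"
    and real: "realizable_over n (Fq q) (gen_mats n {ind_a n k z, ind_b n})"
  shows "\<exists>i<n. [int q = k ^ i] (mod int m)"
proof -
  let ?y = "eigenvalue k z"
  have inj: "inj_on ?y {..<n}"
    by (auto simp: inj_on_def eigenvalue_eq_iff[OF m ord n prim] cong_def)
  have sums: "(\<Sum>i<n. ?y i ^ j) \<in> Fq q" for j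
  proof -
    have "diag_matrix n (\<lambda>i. ?y i ^ j) \<in> gen_mats n {ind_a n k z, ind_b n}"
      by (rule diag_powers_in_gen_mats) (simp add: ind_a_diag)
    from realizable_trace_in_Fq[OF p q real this] show ?thesis
      by (simp add: mat_trace_def diag_matrix_def)
  qed
  obtain i where "i < n" "?y i = ?y 0 ^ q"
    using Fq_power_sums_imp_frobenius_stable[OF p q m m_unit eigenvalue_root_of_unity[OF prim] inj sums]
      n by auto
  hence "z powi (k ^ i) = z powi int q" by (simp add: eigenvalue_def power_int_of_nat)
  hence "[k ^ i = int q] (mod int m)" by (simp only: primitive_root_powi_eq_iff[OF m prim])
  thus ?thesis using \<open>i < n\<close> by (auto intro: cong_sym)
qed

text \<open>Sufficiency: if q = k^t mod m, the shift by t and the Vandermonde matrix of the eigenvalues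
  realize rho^G over F_q.\<close>
lemma cong_imp_realizable:
  fixes z :: "'a::field"
  assumes m: "m \<ge> 1" and n: "n \<ge> 1" and ord: "mult_ord m k = n"
    and p: "prime CHAR('a)" and q: "q = CHAR('a) ^ r"
    and prim: "primitive_root_of_unity m z"
    and t_lt: "t < n" and t: "[int q = k ^ t] (mod int m)"
  shows "realizable_over n (Fq q) (gen_mats n {ind_a n k z, ind_b n})"
proof -
  let ?y = "eigenvalue k z" and ?R = "shift_matrix n t :: 'a mat"
  have q0: "q > 0" using p q by (simp add: prime_gt_0_nat)
  have frob_y: "?y i ^ q = ?y ((i + t) mod n)" for i
  proof -
    have "[k ^ i * int q = k ^ (i + t)] (mod int m)"
      using cong_mult[OF cong_refl t, of "k ^ i"] by (simp add: power_add)
    hence "z powi (k ^ i * int q) = z powi (k ^ (i + t))"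
      by (simp add: primitive_root_powi_eq_iff[OF m prim])
    hence "?y i ^ q = ?y (i + t)" unfolding eigenvalue_power by (simp add: eigenvalue_def)
    thus ?thesis using eigenvalue_eq_iff[OF m ord n prim] by (simp add: cong_def)
  qed
  have frob_shift: "frob_mat q (shift_matrix n a) = (shift_matrix n a :: 'a mat)" for a
    using q0 by (intro eq_matI) (auto simp: shift_matrix_def perm_matrix_def)
  have frob_A: "frob_mat q (diag_matrix n ?y) * ?R = ?R * diag_matrix n ?y"
    by (rule frob_diag_shift) (use q0 frob_y in auto)
  have frob_B: "frob_mat q (ind_b n) * ?R = ?R * ind_b n"
  proof -
    have "ind_b n * ?R = (shift_matrix n (n - 1 + t) :: 'a mat)"
      using n by (simp add: ind_b_shift shift_matrix_mult)
    also have "\<dots> = ?R * ind_b n" using n by (simp add: ind_b_shift shift_matrix_mult add.commute)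
    finally show ?thesis using frob_shift n by (simp add: ind_b_shift)
  qed
  have gens: "X \<in> carrier_mat n n \<and> frob_mat q X * ?R = ?R * X" if "X \<in> {ind_a n k z, ind_b n}" for X
    using that frob_A frob_B by (auto simp: ind_a_diag ind_b_def)
  define W where "W = mat n n (\<lambda>(i, l). ?y i ^ l)"
  have frob_W: "frob_mat q W = ?R * W"
  proof (rule eq_matI)
    fix i l assume "i < dim_row (?R * W)" "l < dim_col (?R * W)"
    hence il: "i < n" "l < n" by (auto simp: W_def shift_matrix_def perm_matrix_def)
    have "frob_mat q W $$ (i, l) = (?y i ^ q) ^ l"
      using il by (simp add: W_def flip: power_mult) (simp add: mult.commute power_mult)
    also have "\<dots> = (?R * W) $$ (i, l)"
      using il n perm_matrix_mult_index[of W n n i l "\<lambda>i. (i + t) mod n"]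
      by (simp add: frob_y shift_matrix_def W_def)
    finally show "frob_mat q W $$ (i, l) = (?R * W) $$ (i, l)" .
  qed (auto simp: W_def shift_matrix_def perm_matrix_def)
  have det_W: "det W \<noteq> 0" unfolding W_def
    by (rule vandermonde_det_nonzero[OF n]) (auto simp: inj_on_def eigenvalue_eq_iff[OF m ord n prim] cong_def)
  have R'R: "shift_matrix n (n - t) * ?R = 1\<^sub>m n"
    using n t_lt by (simp add: shift_matrix_mult shift_matrix_full_turn)
  show ?thesis
  proof (rule realizable_by_twisting_matrix[OF p q _ _ R'R _ det_W frob_W])
    fix M assume M: "M \<in> gen_mats n {ind_a n k z, ind_b n}"
    show "M \<in> carrier_mat n n \<and> frob_mat q M * ?R = ?R * M"
      by (rule gen_mats_frob_twisted[where gens = "{ind_a n k z, ind_b n}"]) (use p q gens M in auto)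
  qed (auto simp: W_def)
qed

theorem theorem2p5:
  fixes m n s q :: nat and k :: int and \<zeta> :: "'F::alg_closed_field"
  assumes "m \<ge> 1" and "n \<ge> 1"
    and "mult_ord m k = n"
    and "prime s" and "odd s" and "coprime s m"
    and "CHAR('F) = s"
    and "\<forall>x::'F. \<exists>r>0. x ^ (s ^ r) = x"
    and "primitive_root_of_unity m \<zeta>"
    and "\<exists>r\<ge>1. q = s ^ r"
  shows "realizable_over n (Fq q) (gen_mats n {ind_a n k \<zeta>, ind_b n})
     \<longleftrightarrow> (\<exists>i. 0 \<le> i \<and> i \<le> n - 1 \<and> [int q = k ^ i] (mod int m))"
proof -
  note m = assms(1) and n = assms(2) and ord = assms(3) and prim = assms(9)
  have p: "prime CHAR('F)" using assms(4,7) by simp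
  obtain r where q: "q = CHAR('F) ^ r" using assms(7,10) by auto
  have m_unit: "\<not> CHAR('F) dvd m"
    using assms(4,6,7) coprime_common_divisor[of s m s] not_prime_unit by auto
  have "i \<le> n - 1 \<longleftrightarrow> i < n" for i using n by auto
  hence "(\<exists>i. 0 \<le> i \<and> i \<le> n - 1 \<and> [int q = k ^ i] (mod int m)) \<longleftrightarrow> (\<exists>i<n. [int q = k ^ i] (mod int m))"
    by simp
  thus ?thesis
    using realizable_imp_cong[OF m n ord p q m_unit prim] cong_imp_realizable[OF m n ord p q prim]
    by blast
qed

end
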